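(* Let $K\subseteq\mathbb{R}^n$ be a proper cone, $b\in\mathbb{R}^n$, and let $A\in\mathbb{R}^{n\times n}$ be $K$-nonnegative and $K$-monotone. Let $A=U-V$ be a $K$-regular splitting and let $U=F-G$ be a $K$-weak regular splitting of type II such that $VF^{-1}G=GF^{-1}V$. Let $s\geq1$ be a fixed number of inner iterations, and set $$T_{s}=(F^{-1}G)^{s}+\sum_{j=0}^{s-1}(F^{-1}G)^{j}F^{-1}V,\qquad P_s^{-1}=\sum_{j=0}^{s-1}(F^{-1}G)^{j}F^{-1}.$$ Let sequences $\{x_k\},\{y_k\}$ be generated by $x_{k+1}=T_sx_k+P_s^{-1}b$ and $y_{k+1}=T_sy_k+P_s^{-1}b$, $k=0,1,2,\ldots$, from initial vectors $x_0,y_0$ satisfying $$x_1\geq_K x_0,\quad y_0\geq_K y_1,\quad y_0\geq_K A^{-1}b\geq_K x_0.$$ Then (i) $y_k\geq_K y_{k+1}\geq_K x_{k+1}\geq_K x_k$ for all $k=0,1,2,\ldots$; (ii) $\lim_{k\to\infty}x_k=A^{-1}b=\lim_{k\to\infty}y_k$ and $y_k\geq_K y_{k+1}\geq_K A^{-1}b\geq_K x_{k+1}\geq_K x_k$ for all $k=0,1,2,\ldots$.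
   Context: A proper cone $K\subseteq\mathbb{R}^n$ is a closed, convex, pointed, solid cone. For $M\in\mathbb{R}^{n\times n}$, $M\geq_K 0$ ($M$ is $K$-nonnegative) means $MK\subseteq K$; for vectors, $x\geq_K y$ means $x-y\in K$. A matrix $A$ is $K$-monotone if $A$ is nonsingular and $A^{-1}\geq_K 0$. A splitting $A=U-V$ (with $U$ nonsingular) is $K$-regular if $U^{-1}\geq_K 0$ and $V\geq_K 0$; it is a $K$-weak regular splitting of type II if $U^{-1}\geq_K 0$ and $VU^{-1}\geq_K 0$. *)

theory Defs
  imports "HOL-Analysis.Analysis"
begin

definition proper_cone :: "(real^'n) set \<Rightarrow> bool" where
  "proper_cone K \<longleftrightarrow> cone K \<and> closed K \<and> convex K \<and>
     K \<inter> uminus ` K = {0} \<and> interior K \<noteq> {}"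

definition K_nonneg :: "(real^'n) set \<Rightarrow> real^'n^'n \<Rightarrow> bool" where
  "K_nonneg K M \<longleftrightarrow> (\<lambda>x. M *v x) ` K \<subseteq> K"

definition K_ge :: "(real^'n) set \<Rightarrow> real^'n \<Rightarrow> real^'n \<Rightarrow> bool" where
  "K_ge K x y \<longleftrightarrow> x - y \<in> K"

definition K_monotone :: "(real^'n) set \<Rightarrow> real^'n^'n \<Rightarrow> bool" where
  "K_monotone K A \<longleftrightarrow> invertible A \<and> K_nonneg K (matrix_inv A)"

definition K_regular_splitting ::
  "(real^'n) set \<Rightarrow> real^'n^'n \<Rightarrow> real^'n^'n \<Rightarrow> real^'n^'n \<Rightarrow> bool" where
  "K_regular_splitting K A U V \<longleftrightarrow> A = U - V \<and> invertible U \<and>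
     K_nonneg K (matrix_inv U) \<and> K_nonneg K V"

definition K_weak_regular_splitting_II ::
  "(real^'n) set \<Rightarrow> real^'n^'n \<Rightarrow> real^'n^'n \<Rightarrow> real^'n^'n \<Rightarrow> bool" where
  "K_weak_regular_splitting_II K A U V \<longleftrightarrow> A = U - V \<and> invertible U \<and>
     K_nonneg K (matrix_inv U) \<and> K_nonneg K (V ** matrix_inv U)"

definition mpow :: "real^'n^'n \<Rightarrow> nat \<Rightarrow> real^'n^'n" where
  "mpow M j = ((\<lambda>X. M ** X) ^^ j) (mat 1)"

end

theory Submission
  imports Defs
begin

(* Write H = F^-1 G, W = G F^-1 and P = P_s^-1 = sum_{j<s} H^j F^-1 = F^-1 sum_{j<s} W^j.
   Telescoping gives P U = I - H^s and U P = I - W^s, hence T_s = I - P A and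
   A T_s A^-1 = I - A P = W^s + V P. Thus T_s = A^-1 (W^s + V P) A is K-nonnegative because A is.
   So z -> T_s z + P b is a K-monotone affine map fixing A^-1 b, and the orderings follow by
   induction. Since a proper cone is normal, a K-monotone K-bounded sequence converges, and its
   limit is a fixed point. Two fixed points p >=_K q coincide: P A (p - q) = 0, and for s >= 1 the
   vector A (p - q) in K is dominated by sum_{j<s} W^j A (p - q) = 0, hence zero by pointedness. *)

lemma matrix_inv_right: "invertible A \<Longrightarrow> A ** matrix_inv A = mat 1"
  and matrix_inv_left: "invertible A \<Longrightarrow> matrix_inv A ** A = mat 1"
  for A :: "'a::semiring_1^'n^'n"
  unfolding invertible_def matrix_inv_def by (metis (mono_tags, lifting) someI_ex)+

lemma matrix_add_rdistrib: "(B + C) ** A = B ** A + C ** A"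
  for A :: "'a::semiring_1^'p^'n" and B C :: "'a^'n^'m"
  by (vector matrix_matrix_mult_def sum.distrib[symmetric] field_simps)

lemma matrix_diff_rdistrib: "(B - C) ** A = B ** A - C ** A"
  for A :: "'a::ring_1^'p^'n" and B C :: "'a^'n^'m"
  by (vector matrix_matrix_mult_def sum_subtractf[symmetric] field_simps)

lemma matrix_diff_ldistrib: "A ** (B - C) = A ** B - A ** C"
  for A :: "'a::ring_1^'n^'m" and B C :: "'a^'p^'n"
  by (vector matrix_matrix_mult_def sum_subtractf[symmetric] field_simps)

lemma matrix_sum_rdistrib: "(\<Sum>j\<in>S. f j) ** A = (\<Sum>j\<in>S. f j ** A)"
  for A :: "'a::semiring_1^'p^'n" and f :: "'b \<Rightarrow> 'a^'n^'m"
  by (induction S rule: infinite_finite_induct) (simp_all add: matrix_add_rdistrib)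

lemma matrix_sum_ldistrib: "A ** (\<Sum>j\<in>S. f j) = (\<Sum>j\<in>S. A ** f j)"
  for A :: "'a::semiring_1^'n^'m" and f :: "'b \<Rightarrow> 'a^'p^'n"
  by (induction S rule: infinite_finite_induct) (simp_all add: matrix_add_ldistrib)

lemma mpow_0 [simp]: "mpow M 0 = mat 1"
  by (simp add: mpow_def)

lemma mpow_Suc [simp]: "mpow M (Suc j) = M ** mpow M j"
  by (simp add: mpow_def)

lemma mpow_intertwine: "M ** X = X ** N \<Longrightarrow> mpow M j ** X = X ** mpow N j"
  by (induction j) (simp_all add: matrix_mul_assoc, metis matrix_mul_assoc)

lemma mpow_commute: "mpow M j ** M = M ** mpow M j"
  by (rule mpow_intertwine) (rule refl)

lemma sum_mpow_telescope_left: "(mat 1 - M) ** (\<Sum>j<s. mpow M j) = mat 1 - mpow M s"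
proof -
  have "(mat 1 - M) ** (\<Sum>j<s. mpow M j) = (\<Sum>j<s. mpow M j - mpow M (Suc j))"
    by (simp add: matrix_sum_ldistrib matrix_diff_rdistrib)
  also have "\<dots> = mat 1 - mpow M s"
    using sum_lessThan_telescope'[of "mpow M" s] by simp
  finally show ?thesis .
qed

lemma sum_mpow_telescope_right: "(\<Sum>j<s. mpow M j) ** (mat 1 - M) = mat 1 - mpow M s"
proof -
  have "(\<Sum>j<s. mpow M j) ** (mat 1 - M) = (\<Sum>j<s. mpow M j - mpow M (Suc j))"
    by (simp add: matrix_sum_rdistrib matrix_diff_ldistrib mpow_commute)
      (rule sum_subtractf[symmetric])
  also have "\<dots> = mat 1 - mpow M s"
    using sum_lessThan_telescope'[of "mpow M" s] by simp
  finally show ?thesis .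
qed

lemma K_nonneg_apply: "K_nonneg K M \<Longrightarrow> x \<in> K \<Longrightarrow> M *v x \<in> K"
  unfolding K_nonneg_def by blast

lemma K_nonneg_mult: "K_nonneg K M \<Longrightarrow> K_nonneg K N \<Longrightarrow> K_nonneg K (M ** N)"
  unfolding K_nonneg_def by (auto simp: matrix_vector_mul_assoc[symmetric])

lemma K_nonneg_mat_1: "K_nonneg K (mat 1)"
  unfolding K_nonneg_def by auto

lemma K_nonneg_mpow: "K_nonneg K M \<Longrightarrow> K_nonneg K (mpow M j)"
  by (induction j) (simp_all add: K_nonneg_mat_1 K_nonneg_mult)

lemma K_ge_mult: "K_nonneg K M \<Longrightarrow> K_ge K x y \<Longrightarrow> K_ge K (M *v x) (M *v y)"
  unfolding K_ge_def by (metis K_nonneg_apply matrix_vector_mult_diff_distrib)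

lemma K_ge_affine_iterates:
  assumes "K_nonneg K M"
    and "\<And>k. z (Suc k) = M *v z k + c" and "\<And>k. w (Suc k) = M *v w k + c"
    and "K_ge K (w 0) (z 0)"
  shows "K_ge K (w k) (z k)"
proof (induction k)
  case 0
  show ?case by (fact assms(4))
next
  case (Suc k)
  then show ?case
    using K_ge_mult[OF assms(1) Suc] assms(2,3) by (simp add: K_ge_def)
qed

lemma affine_iterates_limit_fixpoint:
  fixes M :: "real^'n^'n"
  assumes "z \<longlonglongrightarrow> l" and "\<And>k. z (Suc k) = M *v z k + c"
  shows "l = M *v l + c"
proof (rule LIMSEQ_unique)
  show "(\<lambda>k. z (Suc k)) \<longlonglongrightarrow> l"
    using assms(1) by (rule LIMSEQ_Suc)
  have "(\<lambda>k. M *v z k + c) \<longlonglongrightarrow> M *v l + c"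
    by (intro tendsto_add bounded_linear.tendsto[OF matrix_vector_mul_bounded_linear] assms(1)
        tendsto_const)
  then show "(\<lambda>k. z (Suc k)) \<longlonglongrightarrow> M *v l + c"
    by (simp add: assms(2))
qed

lemma affine_fixpoint_uminus:
  fixes M :: "real^'n^'n"
  assumes "v = M *v v + d"
  shows "- v = M *v - v + - d"
proof -
  have "- v = - (M *v v + d)"
    using assms by (rule arg_cong[where f = uminus])
  also have "\<dots> = M *v - v + - d"
    by (simp add: linear_neg[OF matrix_vector_mul_linear])
  finally show ?thesis .
qed

context
  fixes K :: "(real^'n) set"
  assumes K: "proper_cone K"
begin

lemma proper_cone_closed: "closed K"
  using K unfolding proper_cone_def by simp

lemma proper_cone_add: "x \<in> K \<Longrightarrow> y \<in> K \<Longrightarrow> x + y \<in> K"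
  using K convex_cone[of K] unfolding proper_cone_def by simp

lemma proper_cone_scaleR: "x \<in> K \<Longrightarrow> 0 \<le> c \<Longrightarrow> c *\<^sub>R x \<in> K"
  using K unfolding proper_cone_def by (simp add: mem_cone)

lemma proper_cone_zero: "0 \<in> K"
proof -
  have "K \<noteq> {}"
    using K interior_subset unfolding proper_cone_def by blast
  then show ?thesis
    using K cone_contains_0[of K] unfolding proper_cone_def by blast
qed

lemma proper_cone_pointed:
  assumes "x \<in> K" and "- x \<in> K"
  shows "x = 0"
proof -
  have "x \<in> K \<inter> uminus ` K"
    using assms by (simp add: image_iff) (metis minus_minus)
  then show ?thesis
    using K unfolding proper_cone_def by simp
qed

lemma K_ge_refl: "K_ge K x x"
  by (simp add: K_ge_def proper_cone_zero)

lemma K_ge_trans: "K_ge K x y \<Longrightarrow> K_ge K y z \<Longrightarrow> K_ge K x z"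
  unfolding K_ge_def using proper_cone_add[of "x - y" "y - z"] by simp

lemma K_ge_tendsto:
  assumes "(f \<longlongrightarrow> a) F" and "(g \<longlongrightarrow> c) F" and "F \<noteq> bot"
    and "eventually (\<lambda>k. K_ge K (f k) (g k)) F"
  shows "K_ge K a c"
  unfolding K_ge_def
proof (rule Lim_in_closed_set[OF proper_cone_closed])
  show "eventually (\<lambda>k. f k - g k \<in> K) F"
    using assms(4) unfolding K_ge_def .
  show "((\<lambda>k. f k - g k) \<longlongrightarrow> a - c) F"
    by (intro tendsto_diff assms(1,2))
qed (fact assms(3))

lemma K_nonneg_zero: "K_nonneg K 0"
  unfolding K_nonneg_def by (auto simp: proper_cone_zero)

lemma K_nonneg_add: "K_nonneg K M \<Longrightarrow> K_nonneg K N \<Longrightarrow> K_nonneg K (M + N)"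
  unfolding K_nonneg_def by (auto simp: matrix_vector_mult_add_rdistrib intro!: proper_cone_add)

lemma K_nonneg_sum: "(\<And>j. j \<in> S \<Longrightarrow> K_nonneg K (f j)) \<Longrightarrow> K_nonneg K (\<Sum>j\<in>S. f j)"
  by (induction S rule: infinite_finite_induct) (simp_all add: K_nonneg_zero K_nonneg_add)

lemma sum_mpow_mulv_eq_0_iff:
  assumes "K_nonneg K W" and "0 < s" and "q \<in> K"
  shows "(\<Sum>j<s. mpow W j) *v q = 0 \<longleftrightarrow> q = 0"
proof
  assume vanish: "(\<Sum>j<s. mpow W j) *v q = 0"
  obtain r where s: "s = Suc r"
    using assms(2) gr0_implies_Suc by blast
  have "(\<Sum>j<s. mpow W j) *v q = q + (\<Sum>j<r. mpow W (Suc j)) *v q"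
    unfolding s sum.lessThan_Suc_shift by (simp add: matrix_vector_mult_add_rdistrib)
  moreover have "(\<Sum>j<r. mpow W (Suc j)) *v q \<in> K"
    using assms(1,3) by (intro K_nonneg_apply K_nonneg_sum K_nonneg_mpow)
  ultimately have "- q \<in> K"
    using vanish by (metis add.commute eq_neg_iff_add_eq_0)
  then show "q = 0"
    using assms(3) proper_cone_pointed by blast
qed simp

lemma proper_cone_normal: "\<exists>C\<ge>0. \<forall>z w. z \<in> K \<longrightarrow> w - z \<in> K \<longrightarrow> norm z \<le> C * norm w"
proof -
  let ?S = "sphere 0 1 \<inter> K" and ?T = "uminus ` K"
  have "?S \<inter> ?T = {}"
    using proper_cone_pointed by fastforce
  moreover have "compact ?S" and "closed ?T"
    using proper_cone_closed by (simp_all add: compact_Int_closed closed_negations)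
  ultimately obtain d where d: "d > 0" and sep: "\<And>u v. u \<in> ?S \<Longrightarrow> v \<in> ?T \<Longrightarrow> d \<le> dist u v"
    using separate_compact_closed by metis
  have "norm z \<le> (1 / d) * norm w" if z: "z \<in> K" and wz: "w - z \<in> K" for z w
  proof (cases "z = 0")
    case False
    let ?n = "norm z"
    have "?n > 0"
      using False by simp
    have "(1 / ?n) *\<^sub>R z \<in> ?S"
      using z \<open>?n > 0\<close> by (simp add: proper_cone_scaleR)
    moreover have "- ((1 / ?n) *\<^sub>R (w - z)) \<in> ?T"
      using wz \<open>?n > 0\<close> by (simp add: proper_cone_scaleR)
    ultimately have "d \<le> dist ((1 / ?n) *\<^sub>R z) (- ((1 / ?n) *\<^sub>R (w - z)))"
      by (rule sep)
    also have "\<dots> = norm w / ?n"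
      using \<open>?n > 0\<close> by (simp add: dist_norm algebra_simps)
    finally show ?thesis
      using d \<open>?n > 0\<close> by (simp add: field_simps)
  qed (use d in simp)
  then show ?thesis
    using d by (intro exI[of _ "1 / d"]) auto
qed

lemma K_ge_chain:
  assumes "\<And>k. K_ge K (z (Suc k)) (z k)" and "k \<le> m"
  shows "K_ge K (z m) (z k)"
  using assms(2) by (induction m rule: dec_induct) (use K_ge_refl K_ge_trans assms(1) in blast)+

lemma K_increasing_bounded:
  assumes "\<And>k. K_ge K (z (Suc k)) (z k)" and "\<And>k. K_ge K c (z k)"
  shows "bounded (range z)"
proof -
  obtain C where C: "\<And>u w. u \<in> K \<Longrightarrow> w - u \<in> K \<Longrightarrow> norm u \<le> C * norm w"
    using proper_cone_normal by blast
  have "norm (z k - z 0) \<le> C * norm (c - z 0)" for k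
    using C[of "z k - z 0" "c - z 0"] K_ge_chain[of z, OF assms(1), of 0 k] assms(2)[of k]
    by (simp add: K_ge_def)
  then have "norm (z k) \<le> C * norm (c - z 0) + norm (z 0)" for k
    by (smt (verit) norm_triangle_ineq2)
  then show ?thesis
    unfolding bounded_iff by blast
qed

lemma K_increasing_subseq_tendsto:
  assumes inc: "\<And>k. K_ge K (z (Suc k)) (z k)"
    and r: "strict_mono r" and lim: "(z \<circ> r) \<longlonglongrightarrow> l"
  shows "z \<longlonglongrightarrow> l"
proof (rule LIMSEQ_I)
  fix e :: real
  assume "e > 0"
  obtain C where "C \<ge> 0" and C: "\<And>u w. u \<in> K \<Longrightarrow> w - u \<in> K \<Longrightarrow> norm u \<le> C * norm w"
    using proper_cone_normal by blast
  have above: "K_ge K l (z k)" for k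
  proof (rule K_ge_tendsto[OF lim tendsto_const])
    show "eventually (\<lambda>n. K_ge K ((z \<circ> r) n) (z k)) sequentially"
      unfolding eventually_sequentially
    proof (intro exI allI impI)
      fix n
      assume "k \<le> n"
      then have "k \<le> r n"
        using seq_suble[OF r, of n] by linarith
      then show "K_ge K ((z \<circ> r) n) (z k)"
        using K_ge_chain[of z, OF inc] by simp
    qed
  qed simp
  have "e / (C + 1) > 0"
    using \<open>e > 0\<close> \<open>C \<ge> 0\<close> by simp
  then obtain N where "\<forall>n\<ge>N. norm ((z \<circ> r) n - l) < e / (C + 1)"
    using LIMSEQ_D[OF lim] by blast
  then have N: "(C + 1) * norm (l - z (r N)) < e"
    using \<open>C \<ge> 0\<close> by (simp add: norm_minus_commute pos_less_divide_eq mult.commute)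
  have "norm (z k - l) < e" if "r N \<le> k" for k
  proof -
    \<comment> \<open>z (r N) <=_K z k <=_K l, so 0 <=_K l - z k <=_K l - z (r N)\<close>
    have "norm (l - z k) \<le> C * norm (l - z (r N))"
      using C[of "l - z k" "l - z (r N)"] above[of k] K_ge_chain[of z, OF inc that]
      by (simp add: K_ge_def)
    also have "\<dots> \<le> (C + 1) * norm (l - z (r N))"
      by (simp add: distrib_right)
    finally show ?thesis
      using N by (simp add: norm_minus_commute)
  qed
  then show "\<exists>M. \<forall>k\<ge>M. norm (z k - l) < e"
    by blast
qed

lemma K_increasing_bounded_convergent:
  assumes "\<And>k. K_ge K (z (Suc k)) (z k)" and "\<And>k. K_ge K c (z k)"
  shows "convergent z"
proof -
  obtain l r where "strict_mono r" "(z \<circ> r) \<longlonglongrightarrow> l"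
    using bounded_imp_convergent_subsequence K_increasing_bounded[of z, OF assms] by blast
  then show ?thesis
    unfolding convergent_def using K_increasing_subseq_tendsto[of z, OF assms(1)] by blast
qed

lemma K_increasing_iterates:
  fixes M :: "real^'n^'n"
  assumes M: "K_nonneg K M" and step: "\<And>k. z (Suc k) = M *v z k + c"
    and p_fix: "p = M *v p + c"
    and start: "K_ge K (z 1) (z 0)" and start_below: "K_ge K p (z 0)"
    and unique: "\<And>q. q = M *v q + c \<Longrightarrow> K_ge K p q \<Longrightarrow> p = q"
  shows "K_ge K (z (Suc k)) (z k)" and "K_ge K p (z k)" and "z \<longlonglongrightarrow> p"
proof -
  have inc: "K_ge K (z (Suc k)) (z k)" for k
    using K_ge_affine_iterates[of K M z c "\<lambda>k. z (Suc k)", OF M step step] start by simp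
  have below: "K_ge K p (z k)" for k
    using K_ge_affine_iterates[of K M z c "\<lambda>_. p", OF M step p_fix] start_below by simp
  obtain l where lim: "z \<longlonglongrightarrow> l"
    using K_increasing_bounded_convergent[of z, OF inc below] unfolding convergent_def by blast
  have "l = M *v l + c"
    using lim step by (rule affine_iterates_limit_fixpoint)
  moreover have "K_ge K p l"
    using K_ge_tendsto[OF tendsto_const lim] below by simp
  ultimately have "p = l"
    by (rule unique)
  then show "z \<longlonglongrightarrow> p"
    using lim by simp
  show "K_ge K (z (Suc k)) (z k)" and "K_ge K p (z k)"
    by (fact inc below)+
qed

lemma K_decreasing_iterates:
  fixes M :: "real^'n^'n"
  assumes M: "K_nonneg K M" and step: "\<And>k. z (Suc k) = M *v z k + c"
    and p_fix: "p = M *v p + c"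
    and start: "K_ge K (z 0) (z 1)" and start_above: "K_ge K (z 0) p"
    and unique: "\<And>q. q = M *v q + c \<Longrightarrow> K_ge K q p \<Longrightarrow> q = p"
  shows "K_ge K (z k) (z (Suc k))" and "K_ge K (z k) p" and "z \<longlonglongrightarrow> p"
proof -
  have neg_step: "- z (Suc k) = M *v - z k + - c" for k
    by (simp add: step linear_neg[OF matrix_vector_mul_linear])
  have neg_unique: "- p = q" if "q = M *v q + - c" and "K_ge K (- p) q" for q
  proof -
    have "- q = p"
      using unique[OF affine_fixpoint_uminus[OF that(1), unfolded minus_minus]] that(2)
      by (simp add: K_ge_def minus_diff_commute)
    then show ?thesis
      by (metis minus_minus)
  qed
  have neg_start: "K_ge K (- z 1) (- z 0)" and neg_start_below: "K_ge K (- p) (- z 0)"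
    using start start_above by (simp_all add: K_ge_def)
  note neg = K_increasing_iterates[OF M, of "\<lambda>k. - z k" "- c" "- p",
      OF neg_step affine_fixpoint_uminus[OF p_fix] neg_start neg_start_below neg_unique]
  show "K_ge K (z k) (z (Suc k))" and "K_ge K (z k) p"
    using neg(1,2) by (simp_all add: K_ge_def)
  show "z \<longlonglongrightarrow> p"
    by (rule tendsto_minus_cancel[OF neg(3)])
qed

end

definition two_stage_iter_matrix ::
    "real^'n^'n \<Rightarrow> real^'n^'n \<Rightarrow> real^'n^'n \<Rightarrow> nat \<Rightarrow> real^'n^'n" where
  "two_stage_iter_matrix F G V s = mpow (matrix_inv F ** G) s
     + (\<Sum>j<s. mpow (matrix_inv F ** G) j ** matrix_inv F ** V)"

definition two_stage_prec_inv :: "real^'n^'n \<Rightarrow> real^'n^'n \<Rightarrow> nat \<Rightarrow> real^'n^'n" where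
  "two_stage_prec_inv F G s = (\<Sum>j<s. mpow (matrix_inv F ** G) j ** matrix_inv F)"

lemma two_stage_prec_inv_eq:
  "two_stage_prec_inv F G s = matrix_inv F ** (\<Sum>j<s. mpow (G ** matrix_inv F) j)"
  unfolding two_stage_prec_inv_def matrix_sum_ldistrib
  by (intro sum.cong refl mpow_intertwine) (simp add: matrix_mul_assoc)

lemma two_stage_iter_matrix_eq:
  assumes "invertible F" and "A = U - V" and "U = F - G"
  shows "two_stage_iter_matrix F G V s = mat 1 - two_stage_prec_inv F G s ** A"
proof -
  let ?H = "matrix_inv F ** G" and ?P = "two_stage_prec_inv F G s"
  have "?P ** U = (\<Sum>j<s. mpow ?H j) ** (matrix_inv F ** F - ?H)"
    unfolding two_stage_prec_inv_def matrix_sum_rdistrib[symmetric] assms(3)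
    by (simp add: matrix_diff_ldistrib matrix_mul_assoc)
  also have "\<dots> = mat 1 - mpow ?H s"
    using assms(1) by (simp add: matrix_inv_left sum_mpow_telescope_right)
  finally have "?P ** U = mat 1 - mpow ?H s" .
  moreover have "two_stage_iter_matrix F G V s = mpow ?H s + ?P ** V"
    unfolding two_stage_iter_matrix_def two_stage_prec_inv_def matrix_sum_rdistrib ..
  ultimately show ?thesis
    unfolding assms(2) matrix_diff_ldistrib by simp
qed

lemma two_stage_A_prec_inv_eq:
  assumes "invertible F" and "A = U - V" and "U = F - G"
  shows "mat 1 - A ** two_stage_prec_inv F G s
    = mpow (G ** matrix_inv F) s + V ** two_stage_prec_inv F G s"
proof -
  let ?W = "G ** matrix_inv F" and ?P = "two_stage_prec_inv F G s"
  have "U ** ?P = (F ** matrix_inv F - ?W) ** (\<Sum>j<s. mpow ?W j)"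
    unfolding two_stage_prec_inv_eq assms(3) by (simp add: matrix_diff_rdistrib matrix_mul_assoc)
  also have "\<dots> = mat 1 - mpow ?W s"
    using assms(1) by (simp add: matrix_inv_right sum_mpow_telescope_left)
  finally show ?thesis
    unfolding assms(2) matrix_diff_rdistrib by simp
qed

lemma two_stage_fixpoint:
  assumes "invertible F" and "A = U - V" and "U = F - G" and "A *v p = b"
  shows "p = two_stage_iter_matrix F G V s *v p + two_stage_prec_inv F G s *v b"
  using assms by (simp add: two_stage_iter_matrix_eq matrix_vector_mult_diff_rdistrib
      matrix_vector_mul_assoc[symmetric])

context
  fixes K :: "(real^'n) set"
  assumes K: "proper_cone K"
begin

lemma K_nonneg_two_stage_prec_inv:
  assumes "K_nonneg K (matrix_inv F)" and "K_nonneg K (G ** matrix_inv F)"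
  shows "K_nonneg K (two_stage_prec_inv F G s)"
  unfolding two_stage_prec_inv_eq
  using assms by (simp add: K_nonneg_mult K_nonneg_sum[OF K] K_nonneg_mpow)

lemma K_nonneg_two_stage_iter_matrix:
  assumes A_nonneg: "K_nonneg K A" and A_mono: "K_monotone K A"
    and reg: "K_regular_splitting K A U V" and weak: "K_weak_regular_splitting_II K U F G"
  shows "K_nonneg K (two_stage_iter_matrix F G V s)"
proof -
  let ?P = "two_stage_prec_inv F G s"
  have split: "invertible F" "A = U - V" "U = F - G" and "invertible A"
    using reg weak A_mono
    unfolding K_regular_splitting_def K_weak_regular_splitting_II_def K_monotone_def by auto
  have "two_stage_iter_matrix F G V s = matrix_inv A ** (mat 1 - A ** ?P) ** A"
    using \<open>invertible A\<close>
    by (simp add: two_stage_iter_matrix_eq[OF split] matrix_diff_ldistrib matrix_diff_rdistrib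
        matrix_mul_assoc matrix_inv_left)
  also have "\<dots> = matrix_inv A ** (mpow (G ** matrix_inv F) s + V ** ?P) ** A"
    unfolding two_stage_A_prec_inv_eq[OF split] ..
  finally show ?thesis
    using A_nonneg A_mono reg weak
    unfolding K_monotone_def K_regular_splitting_def K_weak_regular_splitting_II_def
    by (simp add: K_nonneg_mult K_nonneg_add[OF K] K_nonneg_mpow K_nonneg_two_stage_prec_inv)
qed

lemma two_stage_fixpoints_eq:
  assumes A_nonneg: "K_nonneg K A" and "invertible A"
    and reg: "K_regular_splitting K A U V" and weak: "K_weak_regular_splitting_II K U F G"
    and "0 < s"
    and p: "p = two_stage_iter_matrix F G V s *v p + c"
    and q: "q = two_stage_iter_matrix F G V s *v q + c"
    and "K_ge K p q"
  shows "p = q"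
proof -
  let ?W = "G ** matrix_inv F" and ?d = "A *v (p - q)"
  have split: "invertible F" "A = U - V" "U = F - G" and "K_nonneg K ?W"
    using reg weak unfolding K_regular_splitting_def K_weak_regular_splitting_II_def by auto
  have "two_stage_iter_matrix F G V s *v (p - q) = p - q"
    using p q by (metis add_diff_cancel_right matrix_vector_mult_diff_distrib)
  then have "matrix_inv F *v ((\<Sum>j<s. mpow ?W j) *v ?d) = 0"
    by (simp add: two_stage_iter_matrix_eq[OF split] two_stage_prec_inv_eq
        matrix_vector_mult_diff_rdistrib matrix_vector_mul_assoc matrix_mul_assoc)
  then have "(\<Sum>j<s. mpow ?W j) *v ?d = 0"
    using split(1) by (metis matrix_inv_right matrix_vector_mul_assoc matrix_vector_mul_lid
        matrix_vector_mult_0_right)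
  moreover have "?d \<in> K"
    using A_nonneg \<open>K_ge K p q\<close> by (simp add: K_ge_def K_nonneg_apply)
  ultimately have "?d = 0"
    using sum_mpow_mulv_eq_0_iff[OF K \<open>K_nonneg K ?W\<close> \<open>0 < s\<close>] by blast
  then have "matrix_inv A *v ?d = 0"
    by simp
  then show ?thesis
    using \<open>invertible A\<close> by (simp add: matrix_vector_mul_assoc matrix_inv_left)
qed

end

theorem theorem4p1:
  fixes K :: "(real^'n) set" and A U V F G :: "real^'n^'n" and b :: "real^'n"
    and s :: nat and x y :: "nat \<Rightarrow> real^'n"
  assumes K: "proper_cone K"
    and A_nonneg: "K_nonneg K A" and A_mono: "K_monotone K A"
    and reg: "K_regular_splitting K A U V"
    and weak: "K_weak_regular_splitting_II K U F G"
    and comm: "V ** matrix_inv F ** G = G ** matrix_inv F ** V"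
    and s: "s \<ge> 1"
    and x_rec: "\<And>k. x (Suc k) =
       (mpow (matrix_inv F ** G) s + (\<Sum>j<s. mpow (matrix_inv F ** G) j ** matrix_inv F ** V)) *v x k
       + (\<Sum>j<s. mpow (matrix_inv F ** G) j ** matrix_inv F) *v b"
    and y_rec: "\<And>k. y (Suc k) =
       (mpow (matrix_inv F ** G) s + (\<Sum>j<s. mpow (matrix_inv F ** G) j ** matrix_inv F ** V)) *v y k
       + (\<Sum>j<s. mpow (matrix_inv F ** G) j ** matrix_inv F) *v b"
    and x0: "K_ge K (x 1) (x 0)" and y0: "K_ge K (y 0) (y 1)"
    and y0A: "K_ge K (y 0) (matrix_inv A *v b)" and Ax0: "K_ge K (matrix_inv A *v b) (x 0)"
  shows "(\<forall>k. K_ge K (y k) (y (Suc k)) \<and> K_ge K (y (Suc k)) (x (Suc k)) \<and> K_ge K (x (Suc k)) (x k))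
    \<and> (x \<longlonglongrightarrow> matrix_inv A *v b) \<and> (y \<longlonglongrightarrow> matrix_inv A *v b)
    \<and> (\<forall>k. K_ge K (y k) (y (Suc k)) \<and> K_ge K (y (Suc k)) (matrix_inv A *v b)
          \<and> K_ge K (matrix_inv A *v b) (x (Suc k)) \<and> K_ge K (x (Suc k)) (x k))"
proof -
  define T P xs where "T = two_stage_iter_matrix F G V s" and "P = two_stage_prec_inv F G s"
    and "xs = matrix_inv A *v b"
  have split: "invertible F" "A = U - V" "U = F - G" and "invertible A"
    using reg weak A_mono
    unfolding K_regular_splitting_def K_weak_regular_splitting_II_def K_monotone_def by auto
  have T_nonneg: "K_nonneg K T"
    unfolding T_def by (rule K_nonneg_two_stage_iter_matrix[OF K A_nonneg A_mono reg weak])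
  have fixp: "xs = T *v xs + P *v b"
    unfolding T_def P_def xs_def using \<open>invertible A\<close>
    by (intro two_stage_fixpoint[OF split]) (simp add: matrix_vector_mul_assoc matrix_inv_right)
  have fixp_eq: "p = q" if "p = T *v p + P *v b" "q = T *v q + P *v b" "K_ge K p q" for p q
    using two_stage_fixpoints_eq[OF K A_nonneg \<open>invertible A\<close> reg weak _ that[unfolded T_def]] s
    by linarith
  have x_step: "x (Suc k) = T *v x k + P *v b" and y_step: "y (Suc k) = T *v y k + P *v b" for k
    unfolding T_def P_def two_stage_iter_matrix_def two_stage_prec_inv_def by (fact x_rec y_rec)+
  note x = K_increasing_iterates[OF K T_nonneg, of x "P *v b" xs,
      OF x_step fixp x0 Ax0[folded xs_def] fixp_eq[OF fixp]]
  note y = K_decreasing_iterates[OF K T_nonneg, of y "P *v b" xs,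
      OF y_step fixp y0 y0A[folded xs_def] fixp_eq[OF _ fixp]]
  have y_above_x: "K_ge K (y k) (x k)" for k
    using K_ge_trans[OF K y(2) x(2)] .
  show ?thesis
    unfolding xs_def[symmetric] by (intro conjI allI x y y_above_x)
qed

end
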